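(* Let $f$ be a smooth function on $\mathbb R^d_+=(0,\infty)^d$. The following are equivalent: (i) $f\in g^1_1(\mathbb R^d_+)$; (ii) for every $h>0$ there exists $C=C_h>0$ such that $\|x^k\partial^p f(x)\|_{L^2(\mathbb R^d_+)}\le C h^{|p+k|}|k|!$ for all $k,p\in\mathbb N_0^d$; (iii) for every $h>0$ there exists $C=C_h>0$ such that $\sup_{x\in\mathbb R^d_+}|x^k\partial^p f(x)|\le C h^{|p+k|}|k|!$ for all $k,p\in\mathbb N_0^d$.
   Context: Multi-index notation: for $k,p\in\mathbb N_0^d$, $x\in\mathbb R^d_+$, $|k|=k_1+\dots+k_d$, $x^{k}=\prod_j x_j^{k_j}$, $x^{(p+k)/2}=\prod_j x_j^{(p_j+k_j)/2}$, $k^{(\alpha/2)k}=\prod_j k_j^{(\alpha/2)k_j}$ with $0^0=1$, $\partial^p=\partial_{x_1}^{p_1}\cdots\partial_{x_d}^{p_d}$. $\mathcal S(\mathbb R^d_+)$ is the space of $f\in C^\infty(\mathbb R^d_+)$ all of whose derivatives extend continuously to $\overline{\mathbb R^d_+}=[0,\infty)^d$ and satisfy $\sup_{x\in\mathbb R^d_+}x^\beta|\partial^\gamma f(x)|<\infty$ for all $\beta,\gamma\in\mathbb N_0^d$. For $\alpha>0$, $A>0$, $g^{\alpha,A}_{\alpha,A}(\mathbb R^d_+)$ is the space of all $f\in\mathcal S(\mathbb R^d_+)$ with $\sup_{p,k\in\mathbb N_0^d}\frac{\|x^{(p+k)/2}\partial^p f(x)\|_{L^2(\mathbb R^d_+)}}{A^{|p+k|}k^{(\alpha/2)k}p^{(\alpha/2)p}}<\infty$,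 and $g^\alpha_\alpha(\mathbb R^d_+)=\bigcap_{A>0}g^{\alpha,A}_{\alpha,A}(\mathbb R^d_+)$. In particular $g^1_1(\mathbb R^d_+)=\bigcap_{A>0}g^{1,A}_{1,A}(\mathbb R^d_+)$. *)

theory Defs
  imports "HOL-Analysis.Analysis"
begin

text \<open>Points of R^d are vectors of type real^'d ('d a finite index type, d = CARD('d)).
  Multi-indices are functions 'd \<Rightarrow> nat.\<close>

definition orth :: "(real^'d) set" where
  "orth = {x. \<forall>i. 0 < x $ i}"

definition orth_closed :: "(real^'d) set" where
  "orth_closed = {x. \<forall>i. 0 \<le> x $ i}"

definition partial :: "'d \<Rightarrow> (real^'d \<Rightarrow> real) \<Rightarrow> real^'d \<Rightarrow> real" where
  "partial i g x = deriv (\<lambda>t. g (x + t *\<^sub>R axis i 1)) 0"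

text \<open>Iterated partial derivative along a list of directions (last element applied first).\<close>
fun dpl :: "'d list \<Rightarrow> (real^'d \<Rightarrow> real) \<Rightarrow> real^'d \<Rightarrow> real" where
  "dpl [] g = g"
| "dpl (i # is) g = partial i (dpl is g)"

definition smooth_on :: "(real^'d) set \<Rightarrow> (real^'d \<Rightarrow> real) \<Rightarrow> bool" where
  "smooth_on U g \<longleftrightarrow>
     (\<forall>is. continuous_on U (dpl is g) \<and>
        (\<forall>i. \<forall>x\<in>U. (\<lambda>t. dpl is g (x + t *\<^sub>R axis i 1)) differentiable (at 0)))"

definition idx_list :: "'d::finite list" where
  "idx_list = (SOME xs. distinct xs \<and> set xs = UNIV)"

text \<open>\<partial>^p = \<partial>_1^{p_1} ... \<partial>_d^{p_d} (order irrelevant for smooth functions).\<close>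
definition Dp :: "('d::finite \<Rightarrow> nat) \<Rightarrow> (real^'d \<Rightarrow> real) \<Rightarrow> real^'d \<Rightarrow> real" where
  "Dp p g = dpl (concat (map (\<lambda>i. replicate (p i) i) idx_list)) g"

definition mabs :: "('d::finite \<Rightarrow> nat) \<Rightarrow> nat" where
  "mabs p = (\<Sum>j\<in>UNIV. p j)"

definition xpow :: "real^'d::finite \<Rightarrow> ('d \<Rightarrow> nat) \<Rightarrow> real" where
  "xpow x k = (\<Prod>j\<in>UNIV. (x $ j) ^ k j)"

definition xpow_half :: "real^'d::finite \<Rightarrow> ('d \<Rightarrow> nat) \<Rightarrow> ('d \<Rightarrow> nat) \<Rightarrow> real" where
  "xpow_half x p k = (\<Prod>j\<in>UNIV. (x $ j) powr ((real (p j) + real (k j)) / 2))"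

text \<open>k^{(\<alpha>/2)k} = \<Prod>_j (k_j^{k_j})^{\<alpha>/2}, with 0^0 = 1.\<close>
definition kpow :: "real \<Rightarrow> ('d::finite \<Rightarrow> nat) \<Rightarrow> real" where
  "kpow \<alpha> k = (\<Prod>j\<in>UNIV. (real (k j) ^ k j) powr (\<alpha> / 2))"

definition L2norm :: "(real^'d \<Rightarrow> real) \<Rightarrow> ennreal" where
  "L2norm F = (let I = (\<integral>\<^sup>+ x \<in> orth. ennreal ((F x)\<^sup>2) \<partial>lborel) in
     if I = \<infinity> then \<infinity> else ennreal (sqrt (enn2real I)))"

definition schwartz_half :: "(real^'d::finite \<Rightarrow> real) \<Rightarrow> bool" where
  "schwartz_half f \<longleftrightarrow> smooth_on orth f \<and>
     (\<forall>\<gamma>. \<exists>g. continuous_on orth_closed g \<and> (\<forall>x\<in>orth. g x = Dp \<gamma> f x)) \<and>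
     (\<forall>\<beta> \<gamma>. bounded ((\<lambda>x. xpow x \<beta> * Dp \<gamma> f x) ` orth))"

text \<open>g^{\<alpha>,A}_{\<alpha>,A}(R^d_+): the supremum is finite iff it is bounded by some B.\<close>
definition gaA :: "real \<Rightarrow> real \<Rightarrow> (real^'d::finite \<Rightarrow> real) set" where
  "gaA \<alpha> A = {f. schwartz_half f \<and>
     (\<exists>B::real. \<forall>p k. L2norm (\<lambda>x. xpow_half x p k * Dp p f x)
        \<le> ennreal (B * A ^ (mabs p + mabs k) * kpow \<alpha> k * kpow \<alpha> p))}"

definition g_alpha :: "real \<Rightarrow> (real^'d::finite \<Rightarrow> real) set" where
  "g_alpha \<alpha> = (\<Inter>A\<in>{A. A > 0}. gaA \<alpha> A)"

end

theory Submission
  imports Defs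
begin

text \<open>
  Each of the three conditions forces f to vanish on the open orthant, and a function vanishing
  there satisfies all of them trivially.

  For the supremum bounds take phi(t) = f(x + t e_i), t >= 0. With h = 1/4 they give
  |phi^(n)(t)| * t^m <= C h^(n+m) m!. Expand phi(0) by Taylor's formula around T = m: the moment
  of order m at T bounds the Taylor polynomial by C (h e^h)^m, and the remainder tends to 0 as
  the order grows, so phi(0) = 0.

  The L2 conditions give no pointwise bounds, so the same argument is applied to the box averages
  t |-> integral of f(y + t e_i) over y in [a, b]; their derivatives are again box averages, bounded
  by the L2 norms through 2|G| <= R + G^2/R. For g^1_1 the weights n^(n/2) are absorbed with
  n^n <= e^n n! and AM-GM. Finally, a continuous function whose integrals over all boxes in the
  orthant vanish is zero.
\<close>

section \<open>Vanishing at an endpoint via Taylor expansion\<close>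

lemma zero_at_0_of_taylor_bounds:
  fixes D :: "nat \<Rightarrow> real \<Rightarrow> real" and S :: "nat \<Rightarrow> real" and R :: "real \<Rightarrow> nat \<Rightarrow> real"
  assumes deriv: "\<And>n t. 0 \<le> t \<Longrightarrow> (D n has_real_derivative D (Suc n) t) (at t)"
    and sums: "\<And>m N. 0 < m \<Longrightarrow> (\<Sum>n<N. \<bar>D n (real m)\<bar> * real m ^ n / fact n) \<le> S m"
    and S: "S \<longlonglongrightarrow> 0"
    and remainder: "\<And>T N t. 0 < T \<Longrightarrow> t \<in> {0..T} \<Longrightarrow> \<bar>D N t\<bar> * T ^ N / fact N \<le> R T N"
    and R: "\<And>T. 0 < T \<Longrightarrow> R T \<longlonglongrightarrow> 0"
  shows "D 0 0 = 0"
proof -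
  have taylor: "\<bar>D 0 0\<bar> \<le> S m + R (real m) N" if m: "0 < m" and N: "0 < N" for m N
  proof -
    define T where "T = real m"
    have T: "0 < T" using m by (simp add: T_def)
    obtain t where t: "0 < t" "t < T" and eq:
      "D 0 0 = (\<Sum>n<N. D n T / fact n * (0 - T) ^ n) + D N t / fact N * (0 - T) ^ N"
      using Taylor_down[of N D "D 0" 0 T T] N T deriv by auto
    have "\<bar>D 0 0\<bar> \<le> (\<Sum>n<N. \<bar>D n T / fact n * (0 - T) ^ n\<bar>) + \<bar>D N t / fact N * (0 - T) ^ N\<bar>"
      unfolding eq by (rule order_trans[OF abs_triangle_ineq add_right_mono[OF sum_abs]])
    also have "\<dots> = (\<Sum>n<N. \<bar>D n T\<bar> * T ^ n / fact n) + \<bar>D N t\<bar> * T ^ N / fact N"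
      using T by (simp add: abs_mult power_abs)
    also have "\<dots> \<le> S m + R T N"
      using sums[OF m, of N] remainder[OF T, of t N] t unfolding T_def by (intro add_mono) auto
    finally show ?thesis unfolding T_def .
  qed
  have "\<bar>D 0 0\<bar> \<le> S m" if m: "0 < m" for m
  proof (rule LIMSEQ_le_const)
    show "(\<lambda>N. S m + R (real m) N) \<longlonglongrightarrow> S m"
      using tendsto_add[OF tendsto_const R] m by simp
    show "\<exists>N0. \<forall>N\<ge>N0. \<bar>D 0 0\<bar> \<le> S m + R (real m) N"
      using taylor[OF m] by (intro exI[of _ 1]) auto
  qed
  then have "\<bar>D 0 0\<bar> \<le> 0"
    by (intro LIMSEQ_le_const[OF S] exI[of _ 1]) auto
  then show ?thesis by simp
qed

lemma exp_partial_sum_le: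
  fixes x :: real assumes "0 \<le> x"
  shows "(\<Sum>n<N. x ^ n / fact n) \<le> exp x"
proof -
  have s: "(\<lambda>n. x ^ n / fact n) sums exp x"
    using exp_converges[of x] by (simp add: divide_inverse mult.commute)
  show ?thesis
    using sum_le_suminf[OF sums_summable[OF s], of "{..<N}"] sums_unique[OF s] assms by auto
qed

lemma power_div_fact_tendsto_0: "(\<lambda>n. x ^ n / fact n :: real) \<longlonglongrightarrow> 0"
  using summable_LIMSEQ_zero[OF summable_exp[of x]] by (simp add: divide_inverse mult.commute)

lemma taylor_sum_le_of_factorial_moment_bounds:
  fixes D :: "nat \<Rightarrow> real \<Rightarrow> real"
  assumes K: "0 \<le> K"
    and bound: "\<And>n m t. 0 \<le> t \<Longrightarrow> \<bar>D n t\<bar> * t ^ m \<le> K * (1/4) ^ (n + m) * fact m"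
    and m: "0 < m"
  shows "(\<Sum>n<N. \<bar>D n (real m)\<bar> * real m ^ n / fact n) \<le> K * (exp (1/4) / 4) ^ m"
proof -
  define T where "T = real m"
  have T: "0 < T" using m by (simp add: T_def)
  \<comment> \<open>use the moment of order m at T = m, where m! \<le> T^m\<close>
  have summand: "\<bar>D n T\<bar> * T ^ n / fact n \<le> K * (1/4) ^ m * ((T/4) ^ n / fact n)" for n
  proof -
    have "\<bar>D n T\<bar> * T ^ m \<le> K * (1/4) ^ (n + m) * fact m"
      using bound[of T n m] T by simp
    also have "\<dots> \<le> K * (1/4) ^ (n + m) * T ^ m"
      using K fact_le_power[of m, where 'a=real] by (intro mult_left_mono) (auto simp: T_def)
    finally have "\<bar>D n T\<bar> \<le> K * (1/4) ^ (n + m)"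
      using T by simp
    then have "\<bar>D n T\<bar> * (T ^ n / fact n) \<le> K * (1/4) ^ (n + m) * (T ^ n / fact n)"
      by (rule mult_right_mono) (use T in simp)
    also have "\<dots> = K * (1/4) ^ m * ((T/4) ^ n / fact n)"
      by (simp add: power_add power_divide)
    finally show ?thesis by simp
  qed
  have "(\<Sum>n<N. \<bar>D n T\<bar> * T ^ n / fact n) \<le> K * (1/4) ^ m * (\<Sum>n<N. (T/4) ^ n / fact n)"
    unfolding sum_distrib_left by (rule sum_mono) (rule summand)
  also have "\<dots> \<le> K * (1/4) ^ m * exp (T/4)"
    using K T by (intro mult_left_mono exp_partial_sum_le) auto
  also have "exp (T/4) = exp (1/4) ^ m"
    using exp_of_nat_mult[of m "1/4::real"] by (simp add: T_def)
  finally show ?thesis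
    by (simp add: T_def power_divide)
qed

lemma zero_at_0_of_factorial_moment_bounds:
  fixes D :: "nat \<Rightarrow> real \<Rightarrow> real"
  assumes deriv: "\<And>n t. 0 \<le> t \<Longrightarrow> (D n has_real_derivative D (Suc n) t) (at t)"
    and K: "0 \<le> K"
    and bound: "\<And>n m t. 0 \<le> t \<Longrightarrow> \<bar>D n t\<bar> * t ^ m \<le> K * (1/4) ^ (n + m) * fact m"
  shows "D 0 0 = 0"
proof (rule zero_at_0_of_taylor_bounds[where D = D, OF deriv
      taylor_sum_le_of_factorial_moment_bounds[OF K bound]])
  have "exp (1/4) \<le> (3::real)"
    using exp_le exp_le_cancel_iff[of "1/4::real" 1] by linarith
  then show "(\<lambda>m. K * (exp (1/4) / 4) ^ m) \<longlonglongrightarrow> 0"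
    by (intro tendsto_mult_right_zero LIMSEQ_power_zero) auto
  show "\<bar>D N t\<bar> * T ^ N / fact N \<le> K * ((T/4) ^ N / fact N)" if "0 < T" "t \<in> {0..T}" for T N t
  proof -
    have "\<bar>D N t\<bar> \<le> K * (1/4) ^ N" using bound[of t N 0] that by simp
    then have "\<bar>D N t\<bar> * (T ^ N / fact N) \<le> K * (1/4) ^ N * (T ^ N / fact N)"
      by (rule mult_right_mono) (use that in simp)
    then show ?thesis by (simp add: power_divide)
  qed
  show "(\<lambda>N. K * ((T/4) ^ N / fact N)) \<longlonglongrightarrow> 0" for T
    by (intro tendsto_mult_right_zero power_div_fact_tendsto_0)
qed

lemma self_power_div_fact_le_exp: "real n ^ n / fact n \<le> exp 1 ^ n"
proof -
  have s: "(\<lambda>k. real n ^ k / fact k) sums exp (real n)"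
    using exp_converges[of "real n"] by (simp add: divide_inverse mult.commute)
  have "real n ^ n / fact n \<le> exp (real n)"
    using sum_le_suminf[OF sums_summable[OF s], of "{n}"] sums_unique[OF s] by auto
  then show ?thesis using exp_of_nat_mult[of n "1::real"] by simp
qed

lemma power_mult_sqrt_self_power_div_fact_le:
  fixes y :: real assumes y: "0 \<le> y"
  shows "y ^ n * sqrt (real n ^ n) / fact n \<le> ((4 * exp 1 * y\<^sup>2) ^ n / fact n + (1/4) ^ n) / 2"
proof -
  define a where "a = (4 * exp 1 * y\<^sup>2) ^ n / fact n"
  define b where "b = (1/4::real) ^ n"
  have "(y ^ n * sqrt (real n ^ n) / fact n)\<^sup>2 = y ^ (2 * n) * (real n ^ n / fact n) / fact n"
    by (simp add: power_mult_distrib power_divide power2_eq_square power_mult field_simps)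
  also have "\<dots> \<le> y ^ (2 * n) * exp 1 ^ n / fact n"
    by (intro divide_right_mono mult_left_mono self_power_div_fact_le_exp) (use y in auto)
  also have "\<dots> = a * b"
    by (simp add: a_def b_def power_mult_distrib power_mult power_divide field_simps flip: power_mult)
  finally have "y ^ n * sqrt (real n ^ n) / fact n \<le> sqrt (a * b)"
    using y by (intro real_le_rsqrt) auto
  also have "\<dots> \<le> (a + b) / 2"
    by (rule arith_geo_mean_sqrt) (auto simp: a_def b_def)
  finally show ?thesis by (simp add: a_def b_def)
qed

lemma taylor_sum_le_of_sqrt_moment_bounds:
  fixes D :: "nat \<Rightarrow> real \<Rightarrow> real"
  assumes K: "0 \<le> K" and c: "0 < c"
    and bound: "\<And>n m t. 0 \<le> t \<Longrightarrow>
      \<bar>D n t\<bar> * sqrt (c + t) ^ (n + m) \<le> K * (1/8) ^ (n + m) * sqrt (real m ^ m) * sqrt (real n ^ n)"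
    and m: "0 < m"
  shows "(\<Sum>n<N. \<bar>D n (real m)\<bar> * real m ^ n / fact n)
    \<le> K / 2 * ((exp (exp 1 / 16) / 8) ^ m + 4/3 * (1/8) ^ m)"
proof -
  define T where "T = real m"
  have T: "0 < T" using m by (simp add: T_def)
  \<comment> \<open>at T = m the weight sqrt(m^m) of the moment of order m is sqrt T ^ m\<close>
  have summand: "\<bar>D n T\<bar> * T ^ n / fact n
      \<le> K * (1/8) ^ m * (((exp 1 * T / 16) ^ n / fact n + (1/4) ^ n) / 2)" for n
  proof -
    have "\<bar>D n T\<bar> * sqrt T ^ n * sqrt T ^ m = \<bar>D n T\<bar> * sqrt T ^ (n + m)"
      by (simp add: power_add mult.assoc)
    also have "\<dots> \<le> \<bar>D n T\<bar> * sqrt (c + T) ^ (n + m)"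
      using c T by (intro mult_left_mono power_mono) auto
    also have "\<dots> \<le> K * (1/8) ^ (n + m) * sqrt (real n ^ n) * sqrt T ^ m"
      using bound[of T n m] T by (simp add: T_def real_sqrt_power mult_ac)
    finally have "\<bar>D n T\<bar> * sqrt T ^ n \<le> K * (1/8) ^ (n + m) * sqrt (real n ^ n)"
      using T by simp
    then have "\<bar>D n T\<bar> * sqrt T ^ n * (sqrt T ^ n / fact n)
        \<le> K * (1/8) ^ (n + m) * sqrt (real n ^ n) * (sqrt T ^ n / fact n)"
      by (rule mult_right_mono) (use T in simp)
    also have "\<dots> = K * (1/8) ^ m * ((sqrt T / 8) ^ n * sqrt (real n ^ n) / fact n)"
      by (simp add: power_add power_divide mult_ac)
    also have "\<dots> \<le> K * (1/8) ^ m * (((4 * exp 1 * (sqrt T / 8)\<^sup>2) ^ n / fact n + (1/4) ^ n) / 2)"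
      using K T by (intro mult_left_mono power_mult_sqrt_self_power_div_fact_le) auto
    also have "4 * exp 1 * (sqrt T / 8)\<^sup>2 = exp 1 * T / 16"
      using T by (simp add: power_divide)
    finally show ?thesis
      using T by (simp add: mult.assoc flip: power_mult_distrib)
  qed
  have geometric: "(\<Sum>n<N. (1/4::real) ^ n) \<le> 4/3"
    using sum_gp_strict[of "1/4::real" N] by simp
  have "(\<Sum>n<N. \<bar>D n T\<bar> * T ^ n / fact n)
      \<le> (\<Sum>n<N. K * (1/8) ^ m * (((exp 1 * T / 16) ^ n / fact n + (1/4) ^ n) / 2))"
    by (rule sum_mono) (rule summand)
  also have "\<dots> = K * (1/8) ^ m *
      (((\<Sum>n<N. (exp 1 * T / 16) ^ n / fact n) + (\<Sum>n<N. (1/4) ^ n)) / 2)"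
    by (simp add: sum.distrib flip: sum_distrib_left sum_divide_distrib)
  also have "\<dots> \<le> K * (1/8) ^ m * ((exp (exp 1 * T / 16) + 4/3) / 2)"
    using K T geometric
    by (intro mult_left_mono divide_right_mono add_mono exp_partial_sum_le) auto
  also have "exp (exp 1 * T / 16) = exp (exp 1 / 16) ^ m"
    using exp_of_nat_mult[of m "exp 1 / 16 :: real"] by (simp add: T_def mult.commute)
  finally show ?thesis
    by (simp add: T_def power_divide field_simps)
qed

lemma taylor_remainder_le_of_sqrt_moment_bounds:
  fixes D :: "nat \<Rightarrow> real \<Rightarrow> real"
  assumes K: "0 \<le> K" and c: "0 < c"
    and bound: "\<And>n m t. 0 \<le> t \<Longrightarrow>
      \<bar>D n t\<bar> * sqrt (c + t) ^ (n + m) \<le> K * (1/8) ^ (n + m) * sqrt (real m ^ m) * sqrt (real n ^ n)"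
    and T: "0 < T" and t: "t \<in> {0..T}"
  shows "\<bar>D N t\<bar> * T ^ N / fact N
    \<le> K * ((4 * exp 1 * (T / (8 * sqrt c))\<^sup>2) ^ N / fact N + (1/4) ^ N) / 2"
proof -
  define y where "y = T / (8 * sqrt c)"
  have "\<bar>D N t\<bar> * sqrt c ^ N \<le> \<bar>D N t\<bar> * sqrt (c + t) ^ N"
    using c t by (auto intro!: mult_left_mono power_mono)
  also have "\<dots> \<le> K * (1/8) ^ N * sqrt (real N ^ N)"
    using bound[of t N 0] t by simp
  finally have "\<bar>D N t\<bar> * sqrt c ^ N * (T ^ N / fact N / sqrt c ^ N)
      \<le> K * (1/8) ^ N * sqrt (real N ^ N) * (T ^ N / fact N / sqrt c ^ N)"
    by (rule mult_right_mono) (use T c in simp)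
  also have "\<dots> = K * (y ^ N * sqrt (real N ^ N) / fact N)"
    by (simp add: y_def power_divide power_mult_distrib mult_ac)
  also have "\<dots> \<le> K * (((4 * exp 1 * y\<^sup>2) ^ N / fact N + (1/4) ^ N) / 2)"
    using K T c by (intro mult_left_mono power_mult_sqrt_self_power_div_fact_le) (auto simp: y_def)
  finally show ?thesis
    using c by (simp add: y_def)
qed

lemma zero_at_0_of_sqrt_moment_bounds:
  fixes D :: "nat \<Rightarrow> real \<Rightarrow> real"
  assumes deriv: "\<And>n t. 0 \<le> t \<Longrightarrow> (D n has_real_derivative D (Suc n) t) (at t)"
    and K: "0 \<le> K" and c: "0 < c"
    and bound: "\<And>n m t. 0 \<le> t \<Longrightarrow>
      \<bar>D n t\<bar> * sqrt (c + t) ^ (n + m) \<le> K * (1/8) ^ (n + m) * sqrt (real m ^ m) * sqrt (real n ^ n)"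
  shows "D 0 0 = 0"
proof (rule zero_at_0_of_taylor_bounds[where D = D, OF deriv
      taylor_sum_le_of_sqrt_moment_bounds[OF K c bound] _
      taylor_remainder_le_of_sqrt_moment_bounds[OF K c bound]])
  have "exp (exp 1 / 16) \<le> (3::real)"
    using exp_le exp_le_cancel_iff[of "exp 1 / 16::real" 1] by linarith
  then show "(\<lambda>m. K / 2 * ((exp (exp 1 / 16) / 8) ^ m + 4/3 * (1/8) ^ m)) \<longlonglongrightarrow> 0"
    by (auto intro!: tendsto_mult_right_zero tendsto_add_zero LIMSEQ_power_zero)
  show "(\<lambda>N. K * ((4 * exp 1 * (T / (8 * sqrt c))\<^sup>2) ^ N / fact N + (1/4) ^ N) / 2) \<longlonglongrightarrow> 0" for T
    by (auto intro!: tendsto_mult_right_zero tendsto_divide_zero tendsto_add_zero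
        power_div_fact_tendsto_0 LIMSEQ_power_zero)
qed

section \<open>Single-coordinate multi-indices\<close>

definition single_index :: "'d \<Rightarrow> nat \<Rightarrow> ('d \<Rightarrow> nat)" where
  "single_index i n = (\<lambda>j. if j = i then n else 0)"

lemma idx_list_distinct_UNIV: "distinct (idx_list :: 'd::finite list) \<and> set (idx_list :: 'd list) = UNIV"
proof -
  have "\<exists>xs::'d list. distinct xs \<and> set xs = UNIV"
    using finite_distinct_list[of "UNIV :: 'd set"] by auto
  from someI_ex[OF this] show ?thesis unfolding idx_list_def .
qed

lemma concat_replicate_single_index:
  assumes "distinct xs"
  shows "concat (map (\<lambda>j. replicate (single_index i n j) j) xs) = (if i \<in> set xs then replicate n i else [])"
  using assms by (induction xs) (auto simp: single_index_def)

lemma Dp_single_index: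
  fixes f :: "real^'d::finite \<Rightarrow> real"
  shows "Dp (single_index i n) f = dpl (replicate n i) f"
proof -
  have "concat (map (\<lambda>j. replicate (single_index i n j) j) (idx_list :: 'd list)) = replicate n i"
    using idx_list_distinct_UNIV[where 'd='d] by (simp add: concat_replicate_single_index)
  then show ?thesis by (simp add: Dp_def)
qed

lemma mabs_single_index [simp]: "mabs (single_index i n) = n"
  by (simp add: mabs_def single_index_def)

lemma xpow_single_index: "xpow x (single_index i m) = (x $ i) ^ m"
proof -
  have "xpow x (single_index i m) = (\<Prod>j\<in>UNIV. if j = i then (x $ i) ^ m else 1)"
    unfolding xpow_def by (rule prod.cong) (auto simp: single_index_def)
  then show ?thesis by simp
qed

lemma xpow_half_single_index:
  assumes "x \<in> orth"
  shows "xpow_half x (single_index i n) (single_index i m) = sqrt (x $ i) ^ (n + m)"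
proof -
  have pos: "0 < x $ j" for j
    using assms by (simp add: orth_def)
  have "xpow_half x (single_index i n) (single_index i m)
      = (\<Prod>j\<in>UNIV. if j = i then (x $ i) powr ((real n + real m) / 2) else 1)"
    unfolding xpow_half_def by (rule prod.cong) (use pos in \<open>auto simp: single_index_def less_le\<close>)
  also have "(x $ i) powr ((real n + real m) / 2) = ((x $ i) powr (1/2)) powr real (n + m)"
    by (simp add: powr_powr field_simps)
  finally show ?thesis
    using pos[of i] by (simp add: powr_half_sqrt powr_add powr_realpow power_add)
qed

lemma kpow_1_single_index: "kpow 1 (single_index i m) = sqrt (real m ^ m)"
proof -
  have "kpow 1 (single_index i m) = (\<Prod>j\<in>UNIV. if j = i then sqrt (real m ^ m) else 1)"
    unfolding kpow_def by (rule prod.cong) (auto simp: single_index_def powr_half_sqrt)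
  then show ?thesis by simp
qed

section \<open>Smooth functions on the orthant\<close>

lemma open_orth: "open (orth :: (real^'d::finite) set)"
proof -
  have "orth = (\<Inter>j\<in>(UNIV::'d set). {x::real^'d. 0 < x $ j})"
    unfolding orth_def by auto
  then show ?thesis
    by (metis finite_class.finite_UNIV open_INT open_halfspace_component_gt_cart)
qed

lemma axis_shift_in_orth:
  assumes "x \<in> orth" "- (x $ i) < s"
  shows "x + s *\<^sub>R axis i 1 \<in> orth"
  using assms by (auto simp: orth_def axis_def)

lemma axis_shift_nonneg_in_orth:
  assumes "x \<in> orth" "0 \<le> t"
  shows "x + t *\<^sub>R axis i 1 \<in> orth"
proof (rule axis_shift_in_orth[OF assms(1)])
  have "0 < x $ i"
    using assms(1) by (simp add: orth_def)
  then show "- (x $ i) < t"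
    using assms(2) by linarith
qed

lemma cbox_subset_orth:
  assumes "c \<in> orth"
  shows "cbox c d \<subseteq> orth"
proof -
  have "0 < z $ j" if "z \<in> cbox c d" for z j
    using assms that less_le_trans[of 0 "c $ j" "z $ j"] by (simp add: orth_def mem_box_cart)
  then show ?thesis by (auto simp: orth_def)
qed

lemma continuous_on_dpl: "smooth_on U f \<Longrightarrow> continuous_on U (dpl is f)"
  by (simp add: smooth_on_def)

lemma dpl_has_real_derivative_axis:
  fixes f :: "real^'d::finite \<Rightarrow> real"
  assumes sm: "smooth_on orth f" and y: "y + s0 *\<^sub>R axis i 1 \<in> orth"
  shows "((\<lambda>s. dpl is f (y + s *\<^sub>R axis i 1)) has_real_derivative
           dpl (i # is) f (y + s0 *\<^sub>R axis i 1)) (at s0)"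
proof -
  define z where "z = y + s0 *\<^sub>R axis i 1"
  define g where "g = (\<lambda>t. dpl is f (z + t *\<^sub>R axis i 1))"
  have "g differentiable (at 0)"
    using sm y unfolding smooth_on_def g_def z_def by blast
  then have "(g has_real_derivative dpl (i # is) f z) (at (s0 + - s0))"
    by (simp add: DERIV_deriv_iff_real_differentiable[symmetric] g_def partial_def)
  then have "((\<lambda>s. g (s + - s0)) has_real_derivative dpl (i # is) f z) (at s0)"
    by (simp only: DERIV_shift)
  moreover have "(\<lambda>s. g (s + - s0)) = (\<lambda>s. dpl is f (y + s *\<^sub>R axis i 1))"
    unfolding g_def z_def by (auto simp: algebra_simps)
  ultimately show ?thesis unfolding z_def by simp
qed

lemma dpl_eq_0_on_orth:
  fixes f :: "real^'d::finite \<Rightarrow> real"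
  assumes "\<forall>x\<in>orth. f x = 0" "x \<in> orth"
  shows "dpl is f x = 0"
  using assms(2)
proof (induction "is" arbitrary: x)
  case Nil
  then show ?case using assms(1) by simp
next
  case (Cons i js)
  have "\<forall>\<^sub>F t in at 0. x + t *\<^sub>R axis i 1 \<in> orth"
    using Cons.prems open_orth
    by (intro topological_tendstoD[where l = "x + 0 *\<^sub>R axis i 1"]) (auto intro!: tendsto_eq_intros)
  then have "\<forall>\<^sub>F t in at 0. dpl js f (x + t *\<^sub>R axis i 1) = 0"
    by eventually_elim (rule Cons.IH)
  moreover have "dpl js f (x + 0 *\<^sub>R axis i 1) = 0"
    using Cons by simp
  ultimately have "((\<lambda>t. dpl js f (x + t *\<^sub>R axis i 1)) has_real_derivative 0) (at 0)"
    using has_field_derivative_cong_eventually[of "\<lambda>t. dpl js f (x + t *\<^sub>R axis i 1)" "\<lambda>_. 0" 0 UNIV 0]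
    by simp
  then show ?case
    by (simp add: partial_def DERIV_imp_deriv)
qed

section \<open>Box integrals and L2 bounds\<close>

lemma vanishes_if_box_integrals_vanish:
  fixes f :: "real^'d::finite \<Rightarrow> real"
  assumes cont: "continuous_on orth f"
    and box0: "\<And>a b. a \<in> orth \<Longrightarrow> integral (cbox a b) f = 0"
    and x: "x \<in> orth"
  shows "f x = 0"
proof (rule ccontr)
  assume fx: "f x \<noteq> 0"
  define g where "g = (\<lambda>z. f z * f x)"
  have cont_g: "continuous_on orth g"
    unfolding g_def by (intro continuous_intros cont)
  have "open (orth \<inter> g -` {0<..})"
    using continuous_on_open_vimage[OF open_orth, THEN iffD1, OF cont_g, rule_format, of "{0<..}"]
    by (simp add: Int_commute)
  moreover have "x \<in> orth \<inter> g -` {0<..}"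
    using x fx not_real_square_gt_zero[of "f x"] unfolding g_def by blast
  ultimately obtain a b where ab: "cbox a b \<subseteq> orth \<inter> g -` {0<..}" "x \<in> box a b"
    and lt: "\<forall>i\<in>Basis. a \<bullet> i < b \<bullet> i"
    by (rule open_contains_cbox)
  have "a \<in> cbox a b"
    using lt by (auto simp: mem_box less_imp_le)
  then have "integral (cbox a b) f = 0"
    using ab(1) box0 by blast
  then have "integral (cbox a b) g = 0"
    by (simp add: g_def)
  moreover have "continuous_on (cbox a b) g"
    using cont_g ab(1) by (blast intro: continuous_on_subset)
  moreover have "box a b \<noteq> {}"
    using ab(2) by blast
  moreover have "\<forall>z\<in>cbox a b. 0 \<le> g z"
    using ab(1) by (auto intro: less_imp_le)
  ultimately have "\<forall>z\<in>cbox a b. g z = 0"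
    using integral_cbox_eq_0_iff[of a b g] by blast
  moreover have "x \<in> cbox a b"
    using ab(2) box_subset_cbox by blast
  moreover have "0 < g x"
    using fx not_real_square_gt_zero[of "f x"] unfolding g_def by blast
  ultimately show False by simp
qed

lemma box_integral_has_real_derivative:
  fixes f :: "real^'d::finite \<Rightarrow> real"
  assumes sm: "smooth_on orth f" and a: "a \<in> orth" and t: "- (a $ i) < t"
  shows "((\<lambda>s. integral (cbox a b) (\<lambda>y. dpl js f (y + s *\<^sub>R axis i 1))) has_real_derivative
          integral (cbox a b) (\<lambda>y. dpl (i # js) f (y + t *\<^sub>R axis i 1))) (at t)"
proof -
  define U where "U = {- (a $ i)<..}"
  have mem: "y + s *\<^sub>R axis i 1 \<in> orth" if "s \<in> U" "y \<in> cbox a b" for s y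
  proof (rule axis_shift_in_orth)
    show "y \<in> orth"
      using cbox_subset_orth[OF a] that(2) by blast
    have "a $ i \<le> y $ i"
      using that(2) by (simp add: mem_box_cart)
    then show "- (y $ i) < s"
      using that(1) by (simp add: U_def)
  qed
  have "((\<lambda>s. integral (cbox a b) (\<lambda>y. dpl js f (y + s *\<^sub>R axis i 1))) has_field_derivative
          integral (cbox a b) (\<lambda>y. dpl (i # js) f (y + t *\<^sub>R axis i 1))) (at t within U)"
  proof (rule leibniz_rule_field_derivative[where fx = "\<lambda>s y. dpl (i # js) f (y + s *\<^sub>R axis i 1)"])
    fix s y assume "s \<in> U" "y \<in> cbox a b"
    then show "((\<lambda>s. dpl js f (y + s *\<^sub>R axis i 1)) has_field_derivative
        dpl (i # js) f (y + s *\<^sub>R axis i 1)) (at s within U)"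
      using dpl_has_real_derivative_axis[OF sm mem] has_field_derivative_at_within by blast
  next
    fix s assume "s \<in> U"
    then have "continuous_on (cbox a b) (\<lambda>y. dpl js f (y + s *\<^sub>R axis i 1))"
      by (intro continuous_on_compose2[OF continuous_on_dpl[OF sm]]) (auto intro!: continuous_intros mem)
    then show "(\<lambda>y. dpl js f (y + s *\<^sub>R axis i 1)) integrable_on cbox a b"
      by (rule integrable_continuous)
  next
    have "continuous_on (U \<times> cbox a b) (\<lambda>p. dpl (i # js) f (snd p + fst p *\<^sub>R axis i 1))"
      by (intro continuous_on_compose2[OF continuous_on_dpl[OF sm]]) (auto intro!: continuous_intros mem)
    then show "continuous_on (U \<times> cbox a b) (\<lambda>(s, y). dpl (i # js) f (y + s *\<^sub>R axis i 1))"
      by (simp add: case_prod_unfold)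
  qed (use t in \<open>auto simp: U_def\<close>)
  then show ?thesis
    using at_within_open[of t U] t by (simp add: U_def)
qed

lemma nn_integral_sq_le_of_L2norm_le:
  assumes "L2norm F \<le> ennreal R" "0 \<le> R"
  shows "(\<integral>\<^sup>+x\<in>orth. ennreal ((F x)\<^sup>2) \<partial>lborel) \<le> ennreal (R\<^sup>2)"
proof -
  define I where "I = (\<integral>\<^sup>+x\<in>orth. ennreal ((F x)\<^sup>2) \<partial>lborel)"
  have L: "L2norm F = (if I = \<infinity> then \<infinity> else ennreal (sqrt (enn2real I)))"
    unfolding L2norm_def I_def Let_def by simp
  show ?thesis
  proof (cases "I = \<infinity>")
    case True
    then show ?thesis using assms(1) L by (simp add: top_unique)
  next
    case False
    then have "sqrt (enn2real I) \<le> R"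
      using assms L by (simp add: ennreal_le_iff)
    then have "enn2real I \<le> R\<^sup>2"
      using real_sqrt_le_iff by fastforce
    then have "ennreal (enn2real I) \<le> ennreal (R\<^sup>2)"
      by (rule ennreal_leI)
    with False show ?thesis
      unfolding I_def by (simp add: ennreal_enn2real_if)
  qed
qed

lemma integral_cbox_sq_le_of_L2norm_le:
  fixes G W :: "real^'d::finite \<Rightarrow> real"
  assumes sub: "cbox c d \<subseteq> orth" and cont: "continuous_on (cbox c d) G"
    and le: "\<And>z. z \<in> cbox c d \<Longrightarrow> \<bar>G z\<bar> \<le> \<bar>W z\<bar>"
    and L2: "L2norm W \<le> ennreal R" and R: "0 \<le> R"
  shows "integral (cbox c d) (\<lambda>z. (G z)\<^sup>2) \<le> R\<^sup>2"
proof -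
  have "((\<lambda>z. (G z)\<^sup>2) has_integral integral (cbox c d) (\<lambda>z. (G z)\<^sup>2)) (cbox c d)"
    using cont by (intro integrable_integral integrable_continuous continuous_intros)
  from nn_integral_has_integral_lebesgue'[OF _ this]
  have "ennreal (integral (cbox c d) (\<lambda>z. (G z)\<^sup>2))
      = (\<integral>\<^sup>+z. ennreal ((G z)\<^sup>2) * indicator (cbox c d) z \<partial>lborel)"
    by simp
  also have "\<dots> \<le> (\<integral>\<^sup>+z. ennreal ((W z)\<^sup>2) * indicator orth z \<partial>lborel)"
  proof (rule nn_integral_mono)
    fix z
    have "z \<in> cbox c d \<Longrightarrow> (G z)\<^sup>2 \<le> (W z)\<^sup>2"
      using le by (simp add: abs_le_square_iff)
    then show "ennreal ((G z)\<^sup>2) * indicator (cbox c d) z \<le> ennreal ((W z)\<^sup>2) * indicator orth z"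
      using sub by (auto simp: indicator_def ennreal_leI)
  qed
  also have "\<dots> \<le> ennreal (R\<^sup>2)"
    using nn_integral_sq_le_of_L2norm_le[OF L2 R] by simp
  finally show ?thesis
    by (simp add: ennreal_le_iff)
qed

lemma abs_integral_cbox_le_of_integral_sq_le:
  fixes G :: "'a::euclidean_space \<Rightarrow> real"
  assumes cont: "continuous_on (cbox a b) G"
    and sq: "integral (cbox a b) (\<lambda>y. (G y)\<^sup>2) \<le> R\<^sup>2" and R: "0 < R"
  shows "\<bar>integral (cbox a b) G\<bar> \<le> (measure lborel (cbox a b) + 1) / 2 * R"
proof -
  define H where "H = (\<lambda>y. (R + (G y)\<^sup>2 / R) / 2)"
  \<comment> \<open>AM-GM in place of Cauchy-Schwarz\<close>
  have H: "\<bar>G y\<bar> \<le> H y" for y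
  proof -
    have "0 \<le> (R - \<bar>G y\<bar>)\<^sup>2" by simp
    then show ?thesis
      using R by (simp add: H_def field_simps power2_eq_square)
  qed
  define I where "I = integral (cbox a b) (\<lambda>y. (G y)\<^sup>2)"
  have "((\<lambda>y. (G y)\<^sup>2) has_integral I) (cbox a b)"
    unfolding I_def using cont by (intro integrable_integral integrable_continuous continuous_intros)
  moreover have "((\<lambda>y. R) has_integral R * measure lborel (cbox a b)) (cbox a b)"
    using has_integral_const[of R a b] by (simp add: mult.commute)
  ultimately have int_H: "(H has_integral (R * measure lborel (cbox a b) + I / R) / 2) (cbox a b)"
    unfolding H_def by (intro has_integral_divide has_integral_add)
  have "\<bar>integral (cbox a b) G\<bar> \<le> integral (cbox a b) H"
    using integral_norm_bound_integral[OF integrable_continuous[OF cont] has_integral_integrable[OF int_H]] H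
    by simp
  also have "\<dots> = (R * measure lborel (cbox a b) + I / R) / 2"
    using int_H by (rule integral_unique)
  also have "\<dots> \<le> (R * measure lborel (cbox a b) + R) / 2"
    using sq R by (simp add: I_def field_simps power2_eq_square)
  finally show ?thesis
    by (simp add: field_simps)
qed

lemma shifted_box_integral_le_of_L2norm_le:
  fixes G W :: "real^'d::finite \<Rightarrow> real"
  assumes cont: "continuous_on orth G" and av: "a + v \<in> orth"
    and le: "\<And>z. z \<in> cbox (a + v) (b + v) \<Longrightarrow> \<bar>G z\<bar> \<le> \<bar>W z\<bar>"
    and L2: "L2norm W \<le> ennreal R" and R: "0 < R"
  shows "\<bar>integral (cbox a b) (\<lambda>y. G (y + v))\<bar> \<le> (measure lborel (cbox a b) + 1) / 2 * R"
proof (rule abs_integral_cbox_le_of_integral_sq_le[OF _ _ R])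
  have shift: "y + v \<in> cbox (a + v) (b + v)" if "y \<in> cbox a b" for y
    using that by (simp add: mem_box_cart)
  have sub: "cbox (a + v) (b + v) \<subseteq> orth"
    by (rule cbox_subset_orth[OF av])
  show "continuous_on (cbox a b) (\<lambda>y. G (y + v))"
    using shift sub by (intro continuous_on_compose2[OF cont]) (auto intro!: continuous_intros)
  have "integral (cbox a b) (\<lambda>y. (G (y + v))\<^sup>2) = integral (cbox (a + v) (b + v)) (\<lambda>z. (G z)\<^sup>2)"
    using integral_shift_cbox[where f = "\<lambda>z. (G z)\<^sup>2" and a = "a + v" and b = "b + v" and c = v]
    by simp
  also have "\<dots> \<le> R\<^sup>2"
    using sub le L2 R continuous_on_subset[OF cont sub]
    by (intro integral_cbox_sq_le_of_L2norm_le) auto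
  finally show "integral (cbox a b) (\<lambda>y. (G (y + v))\<^sup>2) \<le> R\<^sup>2" .
qed

lemma box_integral_axis_shift_bound:
  fixes f W :: "real^'d::finite \<Rightarrow> real"
  assumes sm: "smooth_on orth f" and a: "a \<in> orth" and t: "0 \<le> t"
    and L2: "L2norm W \<le> ennreal R" and R: "0 < R"
    and le: "\<And>z. z \<in> orth \<Longrightarrow> a $ i + t \<le> z $ i \<Longrightarrow> w * \<bar>dpl (replicate n i) f z\<bar> \<le> \<bar>W z\<bar>"
    and w: "0 \<le> w"
  shows "\<bar>integral (cbox a b) (\<lambda>y. dpl (replicate n i) f (y + t *\<^sub>R axis i 1))\<bar> * w
      \<le> (measure lborel (cbox a b) + 1) / 2 * R"
proof -
  define v :: "real^'d" where "v = t *\<^sub>R axis i 1"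
  have av: "a + v \<in> orth"
    unfolding v_def using a t by (rule axis_shift_nonneg_in_orth)
  have "\<bar>integral (cbox a b) (\<lambda>y. w * dpl (replicate n i) f (y + v))\<bar>
      \<le> (measure lborel (cbox a b) + 1) / 2 * R"
  proof (rule shifted_box_integral_le_of_L2norm_le[OF _ av _ L2 R])
    show "continuous_on orth (\<lambda>z. w * dpl (replicate n i) f z)"
      using continuous_on_dpl[OF sm] by (intro continuous_intros)
    fix z assume z: "z \<in> cbox (a + v) (b + v)"
    then have "z \<in> orth"
      using cbox_subset_orth[OF av] by blast
    moreover have "(a + v) $ i \<le> z $ i"
      using z unfolding mem_box_cart by blast
    then have "a $ i + t \<le> z $ i"
      by (simp add: v_def)
    ultimately show "\<bar>w * dpl (replicate n i) f z\<bar> \<le> \<bar>W z\<bar>"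
      using le w by (simp add: abs_mult)
  qed
  then show ?thesis
    using w by (simp add: v_def abs_mult mult.commute)
qed

section \<open>The three conditions\<close>

definition L2_factorial_bounds :: "(real^'d::finite \<Rightarrow> real) \<Rightarrow> bool" where
  "L2_factorial_bounds f \<longleftrightarrow>
     (\<forall>h>0. \<exists>C>0. \<forall>k p. L2norm (\<lambda>x. xpow x k * Dp p f x)
        \<le> ennreal (C * h ^ (mabs p + mabs k) * fact (mabs k)))"

definition sup_factorial_bounds :: "(real^'d::finite \<Rightarrow> real) \<Rightarrow> bool" where
  "sup_factorial_bounds f \<longleftrightarrow>
     (\<forall>h>0. \<exists>C>0. \<forall>k p. \<forall>x\<in>orth. \<bar>xpow x k * Dp p f x\<bar> \<le> C * h ^ (mabs p + mabs k) * fact (mabs k))"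

lemma sup_factorial_bounds_vanishes:
  fixes f :: "real^'d::finite \<Rightarrow> real"
  assumes sm: "smooth_on orth f" and bounds: "sup_factorial_bounds f" and x0: "x0 \<in> orth"
  shows "f x0 = 0"
proof -
  obtain C where C: "C > 0" and HC: "\<And>k p x. x \<in> orth \<Longrightarrow>
      \<bar>xpow x k * Dp p f x\<bar> \<le> C * (1/4) ^ (mabs p + mabs k) * fact (mabs k)"
    using bounds[unfolded sup_factorial_bounds_def, rule_format, of "1/4"] by auto
  \<comment> \<open>any coordinate direction will do\<close>
  fix i :: 'd
  have ray: "x0 + t *\<^sub>R axis i 1 \<in> orth" if "0 \<le> t" for t
    using x0 that by (rule axis_shift_nonneg_in_orth)
  define D where "D = (\<lambda>n t. dpl (replicate n i) f (x0 + t *\<^sub>R axis i 1))"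
  have "D 0 0 = 0"
  proof (rule zero_at_0_of_factorial_moment_bounds)
    show "(D n has_real_derivative D (Suc n) t) (at t)" if "0 \<le> t" for n t
      unfolding D_def using dpl_has_real_derivative_axis[OF sm ray[OF that]] by simp
    show "0 \<le> C" using C by simp
    show "\<bar>D n t\<bar> * t ^ m \<le> C * (1/4) ^ (n + m) * fact m" if t: "0 \<le> t" for n m t
    proof -
      define y where "y = x0 + t *\<^sub>R axis i 1"
      have "0 < x0 $ i"
        using x0 by (simp add: orth_def)
      then have "t \<le> y $ i"
        by (simp add: y_def)
      then have "\<bar>D n t\<bar> * t ^ m \<le> \<bar>D n t\<bar> * (y $ i) ^ m"
        using t by (intro mult_left_mono power_mono) auto
      also have "\<dots> = \<bar>xpow y (single_index i m) * Dp (single_index i n) f y\<bar>"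
        using \<open>t \<le> y $ i\<close> t
        by (simp add: D_def y_def xpow_single_index Dp_single_index abs_mult)
      also have "\<dots> \<le> C * (1/4) ^ (n + m) * fact m"
        using HC[OF ray[OF t], of "single_index i m" "single_index i n"] by (simp add: y_def)
      finally show ?thesis .
    qed
  qed
  then show ?thesis by (simp add: D_def)
qed

lemma L2_factorial_bounds_vanishes:
  fixes f :: "real^'d::finite \<Rightarrow> real"
  assumes sm: "smooth_on orth f" and bounds: "L2_factorial_bounds f" and x0: "x0 \<in> orth"
  shows "f x0 = 0"
proof (rule vanishes_if_box_integrals_vanish[OF _ _ x0])
  show "continuous_on orth f"
    using continuous_on_dpl[OF sm, of "[]"] by simp
  obtain C where C: "C > 0" and HC: "\<And>k p. L2norm (\<lambda>x. xpow x k * Dp p f x)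
      \<le> ennreal (C * (1/4) ^ (mabs p + mabs k) * fact (mabs k))"
    using bounds[unfolded L2_factorial_bounds_def, rule_format, of "1/4"] by auto
  fix a b :: "real^'d" and i :: 'd
  assume a: "a \<in> orth"
  have ai: "0 < a $ i"
    using a by (simp add: orth_def)
  define cb where "cb = (measure lborel (cbox a b) + 1) / 2"
  define D where "D = (\<lambda>n t. integral (cbox a b) (\<lambda>y. dpl (replicate n i) f (y + t *\<^sub>R axis i 1)))"
  have "D 0 0 = 0"
  proof (rule zero_at_0_of_factorial_moment_bounds[where K = "cb * C"])
    show "(D n has_real_derivative D (Suc n) t) (at t)" if "0 \<le> t" for n t
      unfolding D_def using box_integral_has_real_derivative[OF sm a, of i t b "replicate n i"] that ai
      by simp
    show "0 \<le> cb * C"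
      using C by (simp add: cb_def)
    show "\<bar>D n t\<bar> * t ^ m \<le> cb * C * (1/4) ^ (n + m) * fact m" if t: "0 \<le> t" for n m t
    proof -
      have "\<bar>D n t\<bar> * t ^ m \<le> cb * (C * (1/4) ^ (n + m) * fact m)"
        unfolding D_def cb_def
      proof (rule box_integral_axis_shift_bound[OF sm a t])
        show "L2norm (\<lambda>x. xpow x (single_index i m) * Dp (single_index i n) f x)
            \<le> ennreal (C * (1/4) ^ (n + m) * fact m)"
          using HC[of "single_index i m" "single_index i n"] by (simp add: add.commute)
        fix z :: "real^'d" assume "a $ i + t \<le> z $ i"
        then have "t ^ m \<le> (z $ i) ^ m"
          using ai t by (intro power_mono) auto
        then show "t ^ m * \<bar>dpl (replicate n i) f z\<bar>
            \<le> \<bar>xpow z (single_index i m) * Dp (single_index i n) f z\<bar>"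
          using t by (simp add: xpow_single_index Dp_single_index abs_mult mult_right_mono)
      qed (use C t in auto)
      then show ?thesis by (simp add: mult.assoc)
    qed
  qed
  then show "integral (cbox a b) f = 0"
    by (simp add: D_def)
qed

lemma g_alpha_1_single_index_bound:
  fixes f :: "real^'d::finite \<Rightarrow> real"
  assumes "f \<in> g_alpha 1" "0 < A"
  obtains B where "0 < B"
    and "\<And>i n m. L2norm (\<lambda>x. xpow_half x (single_index i n) (single_index i m) * Dp (single_index i n) f x)
      \<le> ennreal (B * A ^ (n + m) * sqrt (real m ^ m) * sqrt (real n ^ n))"
proof -
  obtain B where HB: "\<And>p k. L2norm (\<lambda>x. xpow_half x p k * Dp p f x)
      \<le> ennreal (B * A ^ (mabs p + mabs k) * kpow 1 k * kpow 1 p)"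
    using assms unfolding g_alpha_def gaA_def by blast
  show thesis
  proof (rule that[of "max B 1"])
    fix i n m
    have "B * A ^ (n + m) * sqrt (real m ^ m) * sqrt (real n ^ n)
        \<le> max B 1 * A ^ (n + m) * sqrt (real m ^ m) * sqrt (real n ^ n)"
      using assms(2) by (intro mult_right_mono) auto
    then show "L2norm (\<lambda>x. xpow_half x (single_index i n) (single_index i m) * Dp (single_index i n) f x)
        \<le> ennreal (max B 1 * A ^ (n + m) * sqrt (real m ^ m) * sqrt (real n ^ n))"
      using HB[of "single_index i n" "single_index i m"]
      by (auto simp: kpow_1_single_index intro: order_trans ennreal_leI)
  qed simp
qed

lemma g_alpha_1_vanishes:
  fixes f :: "real^'d::finite \<Rightarrow> real"
  assumes sm: "smooth_on orth f" and g: "f \<in> g_alpha 1" and x0: "x0 \<in> orth"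
  shows "f x0 = 0"
proof (rule vanishes_if_box_integrals_vanish[OF _ _ x0])
  show "continuous_on orth f"
    using continuous_on_dpl[OF sm, of "[]"] by simp
  obtain B where B: "0 < B" and HB: "\<And>i n m. L2norm
      (\<lambda>x. xpow_half x (single_index i n) (single_index i m) * Dp (single_index i n) f x)
      \<le> ennreal (B * (1/8) ^ (n + m) * sqrt (real m ^ m) * sqrt (real n ^ n))"
    using g_alpha_1_single_index_bound[OF g, of "1/8"] by auto
  fix a b :: "real^'d" and i :: 'd
  assume a: "a \<in> orth"
  have ai: "0 < a $ i"
    using a by (simp add: orth_def)
  have sqrt_self_power_pos: "0 < sqrt (real k ^ k)" for k
    by (cases k) auto
  define cb where "cb = (measure lborel (cbox a b) + 1) / 2"
  define D where "D = (\<lambda>n t. integral (cbox a b) (\<lambda>y. dpl (replicate n i) f (y + t *\<^sub>R axis i 1)))"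
  have "D 0 0 = 0"
  proof (rule zero_at_0_of_sqrt_moment_bounds[where K = "cb * B" and c = "a $ i"])
    show "(D n has_real_derivative D (Suc n) t) (at t)" if "0 \<le> t" for n t
      unfolding D_def using box_integral_has_real_derivative[OF sm a, of i t b "replicate n i"] that ai
      by simp
    show "0 \<le> cb * B"
      using B by (simp add: cb_def)
    show "\<bar>D n t\<bar> * sqrt (a $ i + t) ^ (n + m)
        \<le> cb * B * (1/8) ^ (n + m) * sqrt (real m ^ m) * sqrt (real n ^ n)" if t: "0 \<le> t" for n m t
    proof -
      have "\<bar>D n t\<bar> * sqrt (a $ i + t) ^ (n + m)
          \<le> cb * (B * (1/8) ^ (n + m) * sqrt (real m ^ m) * sqrt (real n ^ n))"
        unfolding D_def cb_def
      proof (rule box_integral_axis_shift_bound[OF sm a t HB])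
        fix z :: "real^'d" assume z: "z \<in> orth" "a $ i + t \<le> z $ i"
        then have "sqrt (a $ i + t) ^ (n + m) \<le> sqrt (z $ i) ^ (n + m)"
          using ai t by (intro power_mono) auto
        then show "sqrt (a $ i + t) ^ (n + m) * \<bar>dpl (replicate n i) f z\<bar>
            \<le> \<bar>xpow_half z (single_index i n) (single_index i m) * Dp (single_index i n) f z\<bar>"
          using z by (simp add: xpow_half_single_index Dp_single_index abs_mult mult_right_mono)
      qed (use B ai t sqrt_self_power_pos in auto)
      then show ?thesis by (simp add: mult.assoc)
    qed
  qed (use ai in simp)
  then show "integral (cbox a b) f = 0"
    by (simp add: D_def)
qed

lemma bounds_of_vanishing_on_orth:
  fixes f :: "real^'d::finite \<Rightarrow> real"
  assumes sm: "smooth_on orth f" and zero: "\<forall>x\<in>orth. f x = 0"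
  shows "f \<in> g_alpha 1" "L2_factorial_bounds f" "sup_factorial_bounds f"
proof -
  have Dp0: "Dp p f x = 0" if "x \<in> orth" for p x
    unfolding Dp_def using dpl_eq_0_on_orth[OF zero that] .
  have L2_0: "L2norm (\<lambda>x. w x * Dp p f x) = 0" for w :: "real^'d \<Rightarrow> real" and p
  proof -
    have "(\<lambda>x. ennreal ((w x * Dp p f x)\<^sup>2) * indicator orth x) = (\<lambda>x. 0)"
      by (auto simp: Dp0 fun_eq_iff indicator_def)
    then show ?thesis by (simp add: L2norm_def)
  qed
  have "schwartz_half f"
    unfolding schwartz_half_def
  proof (intro conjI allI sm)
    show "\<exists>g. continuous_on orth_closed g \<and> (\<forall>x\<in>orth. g x = Dp \<gamma> f x)" for \<gamma>
      using Dp0 by (intro exI[of _ "\<lambda>_. 0"]) auto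
    show "bounded ((\<lambda>x. xpow x \<beta> * Dp \<gamma> f x) ` orth)" for \<beta> \<gamma>
      by (rule bounded_subset[of "{0}"]) (auto simp: Dp0)
  qed
  then show "f \<in> g_alpha 1"
    unfolding g_alpha_def gaA_def by (auto simp: L2_0 intro: exI[of _ 0])
  show "L2_factorial_bounds f"
    unfolding L2_factorial_bounds_def by (auto simp: L2_0 intro: exI[of _ 1])
  show "sup_factorial_bounds f"
    unfolding sup_factorial_bounds_def by (auto simp: Dp0 intro: exI[of _ 1])
qed

theorem lemma2p7:
  fixes f :: "real^'d::finite \<Rightarrow> real"
  assumes "smooth_on orth f"
  shows "(f \<in> g_alpha 1 \<longleftrightarrow>
           (\<forall>h>0. \<exists>C>0. \<forall>k p. L2norm (\<lambda>x. xpow x k * Dp p f x)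
               \<le> ennreal (C * h ^ (mabs p + mabs k) * fact (mabs k))))
       \<and> (f \<in> g_alpha 1 \<longleftrightarrow>
           (\<forall>h>0. \<exists>C>0. \<forall>k p. \<forall>x\<in>orth. \<bar>xpow x k * Dp p f x\<bar>
               \<le> C * h ^ (mabs p + mabs k) * fact (mabs k)))"
proof -
  have "f \<in> g_alpha 1 \<longleftrightarrow> L2_factorial_bounds f" "f \<in> g_alpha 1 \<longleftrightarrow> sup_factorial_bounds f"
    using bounds_of_vanishing_on_orth[OF assms] g_alpha_1_vanishes[OF assms]
      L2_factorial_bounds_vanishes[OF assms] sup_factorial_bounds_vanishes[OF assms]
    by blast+
  then show ?thesis
    unfolding L2_factorial_bounds_def sup_factorial_bounds_def by blast
qed

end
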